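(* Let $p,q$ be positive integers with $p<q$. Then $$\sum_{n=1}^{\infty}\log\left(1+\frac{1}{n}\right)\cos\left(\frac{(2n+1)\pi p}{q}\right)=\log q\,\cos\left(\frac{\pi p}{q}\right)-2\sin\left(\frac{\pi p}{q}\right)\sum_{j=1}^{q-1}\log\Gamma\left(\frac{j}{q}\right)\sin\left(\frac{2\pi jp}{q}\right).$$
   Context: $\Gamma$ denotes the Euler gamma function. *)

theory Defs
  imports "HOL-Analysis.Analysis"
begin

end

theory Submission
  imports Defs
begin

(* The coefficient cos ((2n+1) \<pi> p/q) is q-periodic in n and, since sin (\<pi> p/q) \<noteq> 0, has zero
   sum over a period. Grouping the series in blocks of q terms, the term n = m q + j equals
   ln ((j+1)/q + m) - ln (j/q + m), and by Gauss's product formula the sum of these over m < M is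
   ln \<Gamma>(j/q) - ln \<Gamma>((j+1)/q) + (ln M)/q + o(1); the (ln M)/q parts cancel against the zero mean.
   Summation by parts, with \<Gamma>(1) = 1 and \<Gamma>(1 + 1/q) = \<Gamma>(1/q)/q, turns the resulting
   finite sum into the stated closed form. *)

lemma sums_if_block_sums:
  fixes f :: "nat \<Rightarrow> 'a::real_normed_vector"
  assumes q: "0 < q" and f: "f \<longlonglongrightarrow> 0"
    and blocks: "(\<lambda>M. \<Sum>k<M * q. f k) \<longlonglongrightarrow> L"
  shows "f sums L"
proof -
  define b where "b N = N div q * q" for N
  have b_le: "b N \<le> N" and lt_b: "N < b N + q" for N
    unfolding b_def using div_mult_mod_eq[of N q] mod_less_divisor[OF q, of N] by linarith+
  have div_at_top: "filterlim (\<lambda>N. N div q) at_top sequentially"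
    unfolding filterlim_at_top eventually_at_top_linorder
    using q by (auto simp: less_eq_div_iff_mult_less_eq)
  have b_at_top: "filterlim b at_top sequentially"
    by (rule filterlim_at_top_mono[OF div_at_top]) (use q in \<open>simp add: b_def\<close>)
  have "(\<lambda>N. \<Sum>i<q. norm (f (b N + i))) \<longlonglongrightarrow> 0"
    using tendsto_sum[of "{..<q}" "\<lambda>i N. norm (f (b N + i))" "\<lambda>_. 0"]
      filterlim_compose[OF LIMSEQ_ignore_initial_segment[OF f] b_at_top]
    by (simp add: tendsto_norm_zero)
  then have tail: "(\<lambda>N. \<Sum>k=b N..<N. f k) \<longlonglongrightarrow> 0"
  proof (rule Lim_null_comparison[rotated], intro always_eventually allI)
    fix N
    have "norm (\<Sum>k=b N..<N. f k) \<le> (\<Sum>k=b N..<b N + q. norm (f k))"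
      using lt_b[of N] by (intro order.trans[OF norm_sum] sum_mono2) auto
    also have "\<dots> = (\<Sum>i<q. norm (f (b N + i)))"
      by (simp add: sum.shift_bounds_nat_ivl[of _ 0 "b N" q, simplified] atLeast0LessThan add.commute)
    finally show "norm (\<Sum>k=b N..<N. f k) \<le> (\<Sum>i<q. norm (f (b N + i)))" .
  qed
  have "(\<lambda>N. \<Sum>k<b N. f k) \<longlonglongrightarrow> L"
    using filterlim_compose[OF blocks div_at_top] by (simp add: b_def)
  from tendsto_add[OF this tail] show ?thesis
    unfolding sums_def
    by (simp add: b_le atLeast0LessThan[symmetric] sum.atLeastLessThan_concat)
qed

lemma periodic_add_mult:
  fixes c :: "nat \<Rightarrow> 'a"
  assumes "\<And>n. c (n + q) = c n"
  shows "c (m * q + n) = c n"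
proof (induction m)
  case (Suc m)
  then show ?case
    using assms[of "m * q + n"] by (simp add: add_ac)
qed simp

lemma periodic_bounded:
  fixes c :: "nat \<Rightarrow> real"
  assumes "0 < q" and "\<And>n. c (n + q) = c n"
  shows "\<bar>c n\<bar> \<le> (\<Sum>j<q. \<bar>c j\<bar>)"
proof -
  have "c n = c (n mod q)"
    using periodic_add_mult[of c q, OF assms(2), of "n div q" "n mod q"] by simp
  also have "\<bar>c (n mod q)\<bar> \<le> (\<Sum>j<q. \<bar>c j\<bar>)"
    using assms(1) by (intro member_le_sum) auto
  finally show ?thesis .
qed

lemma sum_periodic_times_blocks:
  fixes c g :: "nat \<Rightarrow> 'a::comm_semiring_0"
  assumes "\<And>n. c (n + q) = c n"
  shows "(\<Sum>k<M * q. c k * g k) = (\<Sum>j<q. c j * (\<Sum>m<M. g (m * q + j)))"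
proof -
  have "(\<Sum>k<M * q. c k * g k) = (\<Sum>m<M. \<Sum>k=m * q..<m * q + q. c k * g k)"
    by (rule sum.nat_group[symmetric])
  also have "\<dots> = (\<Sum>m<M. \<Sum>j<q. c j * g (m * q + j))"
    using periodic_add_mult[of c q, OF assms]
    by (simp add: sum.shift_bounds_nat_ivl[of _ 0 _ q, simplified] atLeast0LessThan add.commute)
  also have "\<dots> = (\<Sum>j<q. c j * (\<Sum>m<M. g (m * q + j)))"
    by (simp add: sum.swap[of _ "{..<M}"] sum_distrib_left)
  finally show ?thesis .
qed

lemma ln_Gamma_series':
  fixes z :: real
  assumes "0 < z" and "0 < n"
  shows "ln (Gamma_series' z n) = ln (fact (n - 1)) + z * ln (real n) - (\<Sum>m<n. ln (z + real m))"
proof -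
  have "ln (pochhammer z n) = (\<Sum>m<n. ln (z + real m))"
    using assms by (simp add: pochhammer_prod ln_prod atLeast0LessThan add_pos_nonneg)
  moreover have "pochhammer z n > 0"
    using assms by (simp add: pochhammer_pos)
  ultimately show ?thesis
    by (simp add: Gamma_series'_def ln_div ln_mult)
qed

lemma sum_ln_shift_tendsto_ln_Gamma:
  fixes a b :: real
  assumes "0 < a" and "0 < b"
  shows "(\<lambda>n. (\<Sum>m<n. ln (b + real m) - ln (a + real m)) - (b - a) * ln (real n))
    \<longlonglongrightarrow> ln (Gamma a) - ln (Gamma b)"
proof (rule Lim_transform_eventually)
  show "(\<lambda>n. ln (Gamma_series' a n) - ln (Gamma_series' b n)) \<longlonglongrightarrow> ln (Gamma a) - ln (Gamma b)"
    using Gamma_real_pos[OF assms(1)] Gamma_real_pos[OF assms(2)]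
    by (intro tendsto_intros Gamma_series'_LIMSEQ) auto
  show "\<forall>\<^sub>F n in sequentially. ln (Gamma_series' a n) - ln (Gamma_series' b n)
      = (\<Sum>m<n. ln (b + real m) - ln (a + real m)) - (b - a) * ln (real n)"
    using eventually_gt_at_top[of 0]
    by eventually_elim (simp add: assms ln_Gamma_series' sum_subtractf algebra_simps)
qed

lemma ln_Gamma_plus1:
  fixes x :: real
  assumes "0 < x"
  shows "ln (Gamma (x + 1)) = ln x + ln (Gamma x)"
proof -
  have "x \<notin> \<int>\<^sub>\<le>\<^sub>0"
    using assms nonpos_Ints_nonpos[of x] by fastforce
  then have "Gamma (x + 1) = x * Gamma x"
    by (rule Gamma_plus1)
  moreover have "Gamma x \<noteq> 0"
    using Gamma_real_pos[OF assms] by linarith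
  ultimately show ?thesis
    using assms by (simp add: ln_mult)
qed

lemma ln_one_plus_inverse_eq_diff:
  assumes "0 < q" and "0 < j"
  shows "ln (1 + 1 / real (m * q + j))
    = ln (real (j + 1) / real q + real m) - ln (real j / real q + real m)"
proof -
  define N where "N = real (m * q + j)"
  have "0 < N"
    unfolding N_def using assms(2) by (simp only: of_nat_0_less_iff)
  have "ln (real (j + 1) / real q + real m) - ln (real j / real q + real m)
      = ln ((N + 1) / real q) - ln (N / real q)"
    using assms(1) by (simp add: N_def field_simps)
  also have "\<dots> = ln ((N + 1) / real q / (N / real q))"
    using assms(1) \<open>0 < N\<close> by (simp add: ln_div)
  also have "\<dots> = ln (1 + 1 / N)"
    by (rule arg_cong[where f = ln]) (use assms(1) \<open>0 < N\<close> in \<open>simp add: field_simps\<close>)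
  finally show ?thesis
    by (simp only: N_def)
qed

lemma periodic_ln_one_plus_inverse_sums:
  fixes c :: "nat \<Rightarrow> real"
  assumes q: "0 < q" and periodic: "\<And>n. c (n + q) = c n"
    and mean_zero: "(\<Sum>j=1..q. c j) = 0"
  shows "(\<lambda>n. ln (1 + 1 / real (n + 1)) * c (n + 1))
    sums (\<Sum>j=1..q. c j * (ln (Gamma (real j / real q)) - ln (Gamma (real (j + 1) / real q))))"
proof (rule sums_if_block_sums[OF q])
  let ?B = "\<Sum>j<q. \<bar>c j\<bar>"
  have "(\<lambda>n. ln (1 + inverse (real (Suc n)))) \<longlonglongrightarrow> ln (1 + 0)"
    by (intro tendsto_intros LIMSEQ_inverse_real_of_nat) simp
  then have "(\<lambda>n. ln (1 + 1 / real (n + 1)) * ?B) \<longlonglongrightarrow> 0"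
    by (simp add: divide_inverse tendsto_mult_left_zero)
  then show "(\<lambda>n. ln (1 + 1 / real (n + 1)) * c (n + 1)) \<longlonglongrightarrow> 0"
    by (rule Lim_null_comparison[rotated])
      (simp add: abs_mult mult_left_mono periodic_bounded[of q c, OF q periodic])
  define S where "S j M = (\<Sum>m<M. ln (real (j + 1) / real q + real m) - ln (real j / real q + real m))"
    for j M :: nat
  have "(\<Sum>k<M * q. ln (1 + 1 / real (k + 1)) * c (k + 1))
      = (\<Sum>j=1..q. c j * (S j M - (real (j + 1) / real q - real j / real q) * ln (real M)))"
    for M :: nat
  proof -
    have "(\<Sum>k<M * q. ln (1 + 1 / real (k + 1)) * c (k + 1))
        = (\<Sum>j<q. c (j + 1) * (\<Sum>m<M. ln (1 + 1 / real (m * q + j + 1))))"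
      using sum_periodic_times_blocks[of "\<lambda>k. c (k + 1)" q "\<lambda>k. ln (1 + 1 / real (k + 1))" M]
        periodic[of "Suc _"]
      by (simp add: mult.commute add.assoc)
    also have "\<dots> = (\<Sum>j=1..q. c j * (\<Sum>m<M. ln (1 + 1 / real (m * q + j))))"
      by (simp add: sum.atLeast1_atMost_eq add_ac)
    also have "\<dots> = (\<Sum>j=1..q. c j * S j M)"
      unfolding S_def using q
      by (intro sum.cong refl arg_cong2[where f = times] ln_one_plus_inverse_eq_diff) auto
    also have "\<dots> = (\<Sum>j=1..q. c j * (S j M - ln (real M) / real q))"
      using mean_zero by (simp add: right_diff_distrib sum_subtractf
          sum_distrib_right[symmetric] sum_divide_distrib[symmetric])
    finally show ?thesis
      by (simp add: diff_divide_distrib[symmetric])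
  qed
  moreover have "(\<lambda>M. \<Sum>j=1..q. c j * (S j M - (real (j + 1) / real q - real j / real q) * ln (real M)))
      \<longlonglongrightarrow> (\<Sum>j=1..q. c j * (ln (Gamma (real j / real q)) - ln (Gamma (real (j + 1) / real q))))"
    unfolding S_def using q
    by (intro tendsto_sum tendsto_mult_left sum_ln_shift_tendsto_ln_Gamma) auto
  ultimately show "(\<lambda>M. \<Sum>k<M * q. ln (1 + 1 / real (k + 1)) * c (k + 1))
      \<longlonglongrightarrow> (\<Sum>j=1..q. c j * (ln (Gamma (real j / real q)) - ln (Gamma (real (j + 1) / real q))))"
    by simp
qed

lemma sum_mult_diff_Suc:
  fixes c G :: "nat \<Rightarrow> 'a::comm_ring"
  shows "(\<Sum>j=1..n. c j * (G j - G (Suc j)))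
    = (\<Sum>j=1..n. (c j - c (j - 1)) * G j) + (c 0 * G 1 - c n * G (Suc n))"
  by (induction n) (simp_all add: algebra_simps)

lemma cos_odd_multiple_periodic:
  fixes x :: real and p :: int
  assumes "real q * x = pi * of_int p"
  shows "cos ((2 * real (n + q) + 1) * x) = cos ((2 * real n + 1) * x)"
proof -
  have "(2 * real (n + q) + 1) * x = (2 * real n + 1) * x + 2 * pi * of_int p"
    using assms by (simp add: algebra_simps)
  then show ?thesis
    by (simp add: cos_add)
qed

lemma sum_cos_odd_multiples_eq_0:
  fixes x :: real and p :: int
  assumes "sin x \<noteq> 0" and "real q * x = pi * of_int p"
  shows "(\<Sum>j=1..q. cos ((2 * real j + 1) * x)) = 0"
proof -
  have telescope: "2 * sin x * cos ((2 * real j + 1) * x)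
      = sin (2 * real (Suc j) * x) - sin (2 * real j * x)" for j
  proof -
    have "2 * real (Suc j) * x = (2 * real j + 1) * x + x"
      and "2 * real j * x = (2 * real j + 1) * x - x"
      by (simp_all add: algebra_simps)
    then show ?thesis
      by (simp add: sin_add sin_diff)
  qed
  have "2 * sin x * (\<Sum>j=1..q. cos ((2 * real j + 1) * x))
      = (\<Sum>j=1..q. sin (2 * real (Suc j) * x) - sin (2 * real j * x))"
    unfolding sum_distrib_left telescope ..
  also have "\<dots> = sin (2 * real (Suc q) * x) - sin (2 * x)"
    using sum_Suc_diff[of 1 q "\<lambda>j. sin (2 * real j * x)"] by simp
  also have "2 * real (Suc q) * x = 2 * x + 2 * pi * of_int p"
    using assms(2) by (simp add: algebra_simps)
  finally show ?thesis
    using assms(1) by (simp add: sin_add)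
qed

lemma sum_cos_odd_ln_Gamma_diff:
  fixes x :: real and p :: int
  assumes q: "0 < q" and qx: "real q * x = pi * of_int p"
  shows "(\<Sum>j=1..q. cos ((2 * real j + 1) * x)
            * (ln (Gamma (real j / real q)) - ln (Gamma (real (j + 1) / real q))))
    = ln (real q) * cos x
      - 2 * sin x * (\<Sum>j=1..q-1. ln (Gamma (real j / real q)) * sin (2 * real j * x))"
proof -
  define c where "c j = cos ((2 * real j + 1) * x)" for j
  define G where "G j = ln (Gamma (real j / real q))" for j
  have c_diff: "c j - c (j - 1) = - 2 * sin x * sin (2 * real j * x)" if "1 \<le> j" for j
  proof -
    have "(2 * real j + 1) * x = 2 * real j * x + x"
      and "(2 * real (j - 1) + 1) * x = 2 * real j * x - x"
      using that by (simp_all add: algebra_simps)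
    then show ?thesis
      by (simp add: c_def cos_add cos_diff)
  qed
  have c_0: "c 0 = cos x" and c_q: "c q = cos x"
    using cos_odd_multiple_periodic[OF qx, of 0] by (simp_all add: c_def)
  have G_q: "G q = 0"
    using q by (simp add: G_def)
  have G_Suc_q: "G (Suc q) = G 1 - ln (real q)"
    using q ln_Gamma_plus1[of "1 / real q"] by (simp add: G_def add_divide_distrib ln_div)
  have "(\<Sum>j=1..q. c j * (G j - G (Suc j)))
      = (\<Sum>j=1..q. (c j - c (j - 1)) * G j) + (c 0 * G 1 - c q * G (Suc q))"
    by (rule sum_mult_diff_Suc)
  also have "(\<Sum>j=1..q. (c j - c (j - 1)) * G j) = (\<Sum>j=1..q-1. (c j - c (j - 1)) * G j)"
    using q G_q by (cases q) simp_all
  also have "\<dots> = - 2 * sin x * (\<Sum>j=1..q-1. G j * sin (2 * real j * x))"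
    unfolding sum_distrib_left
  proof (intro sum.cong refl)
    fix j assume "j \<in> {1..q-1}"
    then show "(c j - c (j - 1)) * G j = - 2 * sin x * (G j * sin (2 * real j * x))"
      using c_diff[of j] by simp
  qed
  also have "c 0 * G 1 - c q * G (Suc q) = ln (real q) * cos x"
    by (simp add: c_0 c_q G_Suc_q algebra_simps)
  finally show ?thesis
    by (simp add: c_def G_def)
qed

theorem mainTheorem4:
  fixes p q :: nat
  assumes "0 < p" and "p < q"
  shows "(\<lambda>n. ln (1 + 1 / real (n + 1)) * cos ((2 * real (n + 1) + 1) * pi * real p / real q))
    sums (ln (real q) * cos (pi * real p / real q)
          - 2 * sin (pi * real p / real q) *
            (\<Sum>j = 1..q - 1. ln (Gamma (real j / real q)) * sin (2 * pi * real j * real p / real q)))"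
proof -
  define x where "x = pi * real p / real q"
  have q: "0 < q"
    using assms by simp
  have qx: "real q * x = pi * of_int (int p)"
    using q by (simp add: x_def)
  have "0 < x" and "x < pi"
    using assms by (simp_all add: x_def divide_less_eq)
  then have "sin x \<noteq> 0"
    using sin_gt_zero by fastforce
  then have "(\<lambda>n. ln (1 + 1 / real (n + 1)) * cos ((2 * real (n + 1) + 1) * x))
      sums (\<Sum>j=1..q. cos ((2 * real j + 1) * x)
              * (ln (Gamma (real j / real q)) - ln (Gamma (real (j + 1) / real q))))"
    by (intro periodic_ln_one_plus_inverse_sums[OF q, of "\<lambda>j. cos ((2 * real j + 1) * x)"]
        cos_odd_multiple_periodic[OF qx] sum_cos_odd_multiples_eq_0[OF _ qx])
  then have "(\<lambda>n. ln (1 + 1 / real (n + 1)) * cos ((2 * real (n + 1) + 1) * x))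
      sums (ln (real q) * cos x
        - 2 * sin x * (\<Sum>j=1..q-1. ln (Gamma (real j / real q)) * sin (2 * real j * x)))"
    unfolding sum_cos_odd_ln_Gamma_diff[OF q qx] .
  then show ?thesis
    by (simp add: x_def mult.assoc mult.left_commute)
qed

end
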